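(* Let $A\in\mathbb{R}^{nd\times nd}$ be symmetric with $d\times d$ blocks $A_{ij}$, $A_{ii}=I_d$, let $p>d$, and $f(S)=\sum_{i,j}\langle A_{ij},S_iS_j^{\top}\rangle$ on $\{S\in\mathbb{R}^{nd\times p}: S_iS_i^{\top}=I_d\ \forall i\}$. If $S$ is a local maximizer of $f$, then \[ \Lambda_{ii}:=\frac12\sum_{j=1}^n(S_iS_j^{\top}A_{ji}+A_{ij}S_jS_i^{\top})\succeq I_d\quad\text{for all }1\le i\le n. \]
   Context: $S_i$ is the $i$-th $d\times p$ block of $S$; $\langle X,Y\rangle=\mathrm{Tr}(XY^{\top})$; $\succeq$ is the Loewner order. *)

theory Defs
  imports "HOL-Analysis.Analysis"
begin

text \<open>An nd x q matrix is indexed by rows ('n \<times> 'd): block index i and in-block index a.\<close>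

definition blk :: "real^('n::finite \<times> 'd::finite)^('n \<times> 'd) \<Rightarrow> 'n \<Rightarrow> 'n \<Rightarrow> real^'d^'d" where
  "blk A i j = (\<chi> a b. A $ (i, a) $ (j, b))"

definition rowblk :: "real^'p::finite^('n::finite \<times> 'd::finite) \<Rightarrow> 'n \<Rightarrow> real^'p^'d" where
  "rowblk S i = (\<chi> a. S $ (i, a))"

definition frob_inner :: "real^'c::finite^'r::finite \<Rightarrow> real^'c^'r \<Rightarrow> real" where
  "frob_inner X Y = trace (X ** transpose Y)"

definition loewner_le :: "real^'d::finite^'d \<Rightarrow> real^'d^'d \<Rightarrow> bool" where
  "loewner_le X Y \<longleftrightarrow> transpose (Y - X) = Y - X \<and> (\<forall>x. 0 \<le> x \<bullet> ((Y - X) *v x))"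

definition stiefel_prod :: "(real^'p::finite^('n::finite \<times> 'd::finite)) set" where
  "stiefel_prod = {S. \<forall>i. rowblk S i ** transpose (rowblk S i) = mat 1}"

definition obj :: "real^('n::finite \<times> 'd::finite)^('n \<times> 'd) \<Rightarrow> real^'p::finite^('n::finite \<times> 'd::finite) \<Rightarrow> real" where
  "obj A S = (\<Sum>i\<in>UNIV. \<Sum>j\<in>UNIV. frob_inner (blk A i j) (rowblk S i ** transpose (rowblk S j)))"

definition local_max_on :: "('a::metric_space \<Rightarrow> real) \<Rightarrow> 'a set \<Rightarrow> 'a \<Rightarrow> bool" where
  "local_max_on f M x \<longleftrightarrow> x \<in> M \<and> (\<exists>e>0. \<forall>y\<in>M. dist y x < e \<longrightarrow> f y \<le> f x)"

definition Lambda_blk :: "real^('n::finite \<times> 'd::finite)^('n \<times> 'd) \<Rightarrow> real^'p::finite^('n::finite \<times> 'd::finite) \<Rightarrow> 'n \<Rightarrow> real^'d^'d" where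
  "Lambda_blk A S i = (1/2) *\<^sub>R (\<Sum>j\<in>UNIV.
      rowblk S i ** transpose (rowblk S j) ** blk A j i + blk A i j ** rowblk S j ** transpose (rowblk S i))"

end

theory Submission
  imports Defs
begin

(* Write G for the i-th block row of A S, so that Lambda_ii is the symmetric part of G S_i^T.
   For a unit vector y, replace the block S_i by S_i + y w^T with w = alpha v + beta u, where
   v = S_i^T y and u is a unit vector orthogonal to the rows of S_i (it exists because p > d).
   When (1 + alpha, beta) lies on the unit circle the perturbed point is again feasible and
   the objective grows by 2 y^T G w + |w|^2 = 2 alpha (y^T Lambda_ii y - 1) + 2 beta y^T G u.
   Fixing the sign of u so that y^T G u >= 0 and taking a small rotation alpha < 0 < beta,
   local maximality leaves only y^T Lambda_ii y >= 1. *)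

lemma sum_UNIV_prod:
  fixes f :: "'n::finite \<times> 'd::finite \<Rightarrow> 'a::comm_monoid_add"
  shows "(\<Sum>r\<in>UNIV. f r) = (\<Sum>k\<in>UNIV. \<Sum>a\<in>UNIV. f (k, a))"
  by (simp add: sum.cartesian_product UNIV_Times_UNIV[symmetric] del: UNIV_Times_UNIV)

lemma sum_UNIV_prod_if_fst:
  fixes f :: "'n::finite \<times> 'd::finite \<Rightarrow> 'a::comm_monoid_add"
  shows "(\<Sum>r\<in>UNIV. if fst r = i then f r else 0) = (\<Sum>a\<in>UNIV. f (i, a))"
proof -
  have "(\<Sum>r\<in>UNIV. if fst r = i then f r else 0) = (\<Sum>k\<in>UNIV. \<Sum>a\<in>UNIV. if k = i then f (k, a) else 0)"
    by (simp only: sum_UNIV_prod[of "\<lambda>r. if fst r = i then f r else 0"] fst_conv)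
  also have "\<dots> = (\<Sum>k\<in>UNIV. if k = i then (\<Sum>a\<in>UNIV. f (k, a)) else 0)"
    by (rule sum.cong[OF refl]) simp
  finally show ?thesis
    by simp
qed

lemma transpose_eq_self_nth:
  assumes "transpose A = A"
  shows "A $ r $ s = A $ s $ r"
proof -
  have "A $ r $ s = transpose A $ r $ s"
    using assms by simp
  then show ?thesis
    by (simp add: transpose_def)
qed

lemma transpose_sum: "transpose (\<Sum>j\<in>J. f j) = (\<Sum>j\<in>J. transpose (f j))"
  by (simp add: vec_eq_iff transpose_def)

lemma matrix_mult_sum_left: "(\<Sum>j\<in>J. f j) ** B = (\<Sum>j\<in>J. f j ** B)"
  unfolding vec_eq_iff matrix_matrix_mult_def
  by (simp add: sum_distrib_right sum.swap[of _ UNIV J])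

lemma matrix_mult_sum_right: "B ** (\<Sum>j\<in>J. f j) = (\<Sum>j\<in>J. B ** f j)"
  unfolding vec_eq_iff matrix_matrix_mult_def
  by (simp add: sum_distrib_left sum.swap[of _ UNIV J])

lemma nth_matrix_mult: "(A ** B) $ r = (\<Sum>s\<in>UNIV. A $ r $ s *\<^sub>R B $ s)"
  by (simp add: vec_eq_iff matrix_matrix_mult_def)

lemma inner_symmetric_part_mult:
  fixes M :: "real^'n^'n"
  shows "x \<bullet> (((1/2) *\<^sub>R (transpose M + M)) *v x) = x \<bullet> (M *v x)"
proof -
  have "x \<bullet> (transpose M *v x) = (x v* M) \<bullet> x"
    by (simp add: inner_commute)
  also have "\<dots> = x \<bullet> (M *v x)"
    by (rule dot_lmul_matrix)
  finally have "x \<bullet> (transpose M *v x) = x \<bullet> (M *v x)" .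
  then show ?thesis
    by (simp add: scaleR_matrix_vector_assoc[symmetric] matrix_vector_mult_add_rdistrib inner_add_right)
qed

lemma loewner_le_mat_1I:
  fixes L :: "real^'d^'d"
  assumes sym: "transpose L = L" and unit: "\<And>y. norm y = 1 \<Longrightarrow> 1 \<le> y \<bullet> (L *v y)"
  shows "loewner_le (mat 1) L"
proof -
  have "x \<bullet> x \<le> x \<bullet> (L *v x)" for x
  proof (cases "x = 0")
    case False
    have "1 \<le> (x /\<^sub>R norm x) \<bullet> (L *v (x /\<^sub>R norm x))"
      using False by (intro unit) simp
    also have "\<dots> = (x \<bullet> (L *v x)) / (norm x)\<^sup>2"
      by (simp add: matrix_vector_mult_scaleR power2_eq_square divide_inverse inverse_mult_distrib mult_ac)
    finally have "(norm x)\<^sup>2 \<le> x \<bullet> (L *v x)"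
      using False by (simp add: le_divide_eq)
    then show ?thesis by (simp add: dot_square_norm)
  qed simp
  moreover have "transpose (L - mat 1) = L - mat 1"
    using sym by (simp add: vec_eq_iff transpose_def mat_def)
  ultimately show ?thesis
    by (simp add: loewner_le_def matrix_vector_mult_diff_rdistrib inner_diff_right)
qed

lemma transpose_blk:
  assumes "transpose A = A"
  shows "transpose (blk A i j) = blk A j i"
  using transpose_eq_self_nth[OF assms] by (simp add: vec_eq_iff transpose_def blk_def)

lemma sum_blk_mult_rowblk: "(\<Sum>j\<in>UNIV. blk A i j ** rowblk S j) = rowblk (A ** S) i"
  by (simp add: vec_eq_iff matrix_matrix_mult_def blk_def rowblk_def sum_UNIV_prod[of "\<lambda>r. A $ _ $ r * S $ r $ _"])

lemma Lambda_blk_eq: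
  assumes "transpose A = A"
  shows "Lambda_blk A S i = (1/2) *\<^sub>R
    (transpose (rowblk (A ** S) i ** transpose (rowblk S i)) + rowblk (A ** S) i ** transpose (rowblk S i))"
proof -
  have "(\<Sum>j\<in>UNIV. rowblk S i ** transpose (rowblk S j) ** blk A j i)
      = rowblk S i ** transpose (\<Sum>j\<in>UNIV. blk A i j ** rowblk S j)"
    by (simp add: transpose_sum matrix_mult_sum_right matrix_transpose_mul transpose_blk[OF assms]
        matrix_mul_assoc)
  moreover have "(\<Sum>j\<in>UNIV. blk A i j ** rowblk S j ** transpose (rowblk S i))
      = (\<Sum>j\<in>UNIV. blk A i j ** rowblk S j) ** transpose (rowblk S i)"
    by (simp add: matrix_mult_sum_left)
  ultimately show ?thesis
    unfolding Lambda_blk_def sum.distrib by (simp add: sum_blk_mult_rowblk matrix_transpose_mul)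
qed

lemma inner_matrix_mult_eq_sum: "X \<bullet> (A ** Y) = (\<Sum>r\<in>UNIV. \<Sum>s\<in>UNIV. A $ r $ s * (X $ r \<bullet> Y $ s))"
  by (simp add: inner_vec_def[of X] nth_matrix_mult inner_sum_right)

lemma inner_symmetric_matrix_mult_commute:
  fixes A :: "real^'n^'n"
  assumes "transpose A = A"
  shows "X \<bullet> (A ** Y) = Y \<bullet> (A ** X)"
  using transpose_eq_self_nth[OF assms] unfolding inner_matrix_mult_eq_sum
  by (subst sum.swap) (simp add: inner_commute)

lemma obj_eq_inner: "obj A S = S \<bullet> (A ** S)"
proof -
  have "obj A S = (\<Sum>k\<in>UNIV. \<Sum>l\<in>UNIV. \<Sum>a\<in>UNIV. \<Sum>b\<in>UNIV. A $ (k, a) $ (l, b) * (S $ (k, a) \<bullet> S $ (l, b)))"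
    by (simp add: obj_def frob_inner_def trace_def matrix_matrix_mult_def transpose_def blk_def
        rowblk_def inner_vec_def)
  also have "\<dots> = (\<Sum>k\<in>UNIV. \<Sum>a\<in>UNIV. \<Sum>l\<in>UNIV. \<Sum>b\<in>UNIV. A $ (k, a) $ (l, b) * (S $ (k, a) \<bullet> S $ (l, b)))"
    by (rule sum.cong[OF refl], rule sum.swap)
  finally show ?thesis
    by (simp add: inner_matrix_mult_eq_sum sum_UNIV_prod[of "\<lambda>r. \<Sum>s\<in>UNIV. _ r s"] sum_UNIV_prod[of "\<lambda>s. _ s"])
qed

lemma obj_add:
  assumes "transpose A = A"
  shows "obj A (S + E) = obj A S + 2 * (E \<bullet> (A ** S)) + obj A E"
  by (simp add: obj_eq_inner matrix_add_ldistrib inner_add_left inner_add_right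
      inner_symmetric_matrix_mult_commute[OF assms, of S E])

lemma stiefel_prod_iff:
  "S \<in> stiefel_prod \<longleftrightarrow> (\<forall>k a b. S $ (k, a) \<bullet> S $ (k, b) = (if a = b then 1 else 0))"
  by (simp add: stiefel_prod_def vec_eq_iff matrix_matrix_mult_def transpose_def rowblk_def
      inner_vec_def mat_def)

definition block_outer :: "'n::finite \<Rightarrow> real^'d::finite \<Rightarrow> real^'p::finite \<Rightarrow> real^'p^('n \<times> 'd)" where
  "block_outer i y w = (\<chi> r. if fst r = i then y $ snd r *\<^sub>R w else 0)"

lemma block_outer_nth [simp]: "block_outer i y w $ r = (if fst r = i then y $ snd r *\<^sub>R w else 0)"
  by (simp add: block_outer_def)

lemma inner_block_outer: "block_outer i y w \<bullet> X = y \<bullet> (rowblk X i *v w)"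
proof -
  have "block_outer i y w \<bullet> X = (\<Sum>r\<in>UNIV. if fst r = i then y $ snd r * (w \<bullet> X $ r) else 0)"
    unfolding inner_vec_def[of "block_outer i y w"] by (rule sum.cong) simp_all
  also have "\<dots> = (\<Sum>a\<in>UNIV. y $ a * (w \<bullet> X $ (i, a)))"
    using sum_UNIV_prod_if_fst[of i "\<lambda>r. y $ snd r * (w \<bullet> X $ r)"] by simp
  also have "\<dots> = y \<bullet> (rowblk X i *v w)"
    by (simp add: inner_vec_def[of y] matrix_vector_mul_component rowblk_def inner_commute)
  finally show ?thesis .
qed

lemma norm_block_outer: "norm (block_outer i y w) = norm y * norm w"
proof -
  have "block_outer i y w \<bullet> block_outer i y w = (y \<bullet> y) * (w \<bullet> w)"
    by (simp add: inner_block_outer matrix_vector_mul_component rowblk_def inner_vec_def[of y]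
        sum_distrib_left mult_ac)
  then show ?thesis
    by (simp add: norm_eq_sqrt_inner real_sqrt_mult)
qed

lemma obj_block_outer: "obj A (block_outer i y w) = (y \<bullet> (blk A i i *v y)) * (w \<bullet> w)"
proof -
  have "rowblk (A ** block_outer i y w) i *v w = (w \<bullet> w) *\<^sub>R (blk A i i *v y)"
    by (simp add: vec_eq_iff matrix_vector_mul_component rowblk_def nth_matrix_mult inner_sum_left
        if_distrib[of "\<lambda>v. _ *\<^sub>R v"] if_distrib[of "\<lambda>v. v \<bullet> _"] sum_UNIV_prod_if_fst blk_def
        inner_vec_def[of _ y] sum_distrib_left mult_ac cong: if_cong)
  then show ?thesis
    by (simp add: obj_eq_inner inner_block_outer)
qed

lemma obj_add_block_outer:
  assumes "transpose A = A" and "blk A i i = mat 1"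
  shows "obj A (S + block_outer i y w) = obj A S + 2 * (y \<bullet> (rowblk (A ** S) i *v w)) + (y \<bullet> y) * (w \<bullet> w)"
  using assms by (simp add: obj_add inner_block_outer obj_block_outer)

lemma add_block_outer_in_stiefel_prod:
  assumes S: "S \<in> stiefel_prod" and Sw: "rowblk S i *v w = \<alpha> *\<^sub>R y" and ww: "w \<bullet> w = - 2 * \<alpha>"
  shows "S + block_outer i y w \<in> stiefel_prod"
  unfolding stiefel_prod_iff
proof (intro allI)
  have orth: "S $ (k, a) \<bullet> S $ (k, b) = (if a = b then 1 else 0)" for k a b
    using S by (simp add: stiefel_prod_iff)
  have Sw_nth: "S $ (i, c) \<bullet> w = \<alpha> * y $ c" for c
    using arg_cong[OF Sw, of "\<lambda>v. v $ c"] by (simp add: matrix_vector_mul_component rowblk_def)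
  fix k a b
  show "(S + block_outer i y w) $ (k, a) \<bullet> (S + block_outer i y w) $ (k, b) = (if a = b then 1 else 0)"
  proof (cases "k = i")
    case True
    then have "(S + block_outer i y w) $ (k, a) \<bullet> (S + block_outer i y w) $ (k, b)
        = S $ (i, a) \<bullet> S $ (i, b) + y $ b * (S $ (i, a) \<bullet> w) + y $ a * (S $ (i, b) \<bullet> w)
          + y $ a * y $ b * (w \<bullet> w)"
      by (simp add: inner_add_left inner_add_right inner_commute[of w "S $ _"] algebra_simps)
    also have "\<dots> = (if a = b then 1 else 0) + y $ a * y $ b * (2 * \<alpha> + w \<bullet> w)"
      by (simp add: orth Sw_nth algebra_simps)
    finally show ?thesis
      using ww by simp
  qed (simp add: orth)
qed

lemma exists_unit_vector_in_null_space:
  fixes M :: "real^'p^'d"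
  assumes "CARD('d) < CARD('p)"
  obtains u where "norm u = 1" and "M *v u = 0"
proof -
  let ?R = "range (\<lambda>c. M $ c)"
  have "dim ?R \<le> card ?R"
    by (rule dim_le_card') simp
  also have "\<dots> \<le> CARD('d)"
    by (rule card_image_le) simp
  also have "\<dots> < DIM(real^'p)"
    using assms by simp
  finally obtain x where "x \<noteq> 0" and x: "\<And>z. z \<in> span ?R \<Longrightarrow> orthogonal x z"
    using orthogonal_to_subspace_exists by blast
  have "M $ c \<bullet> x = 0" for c
    using x[of "M $ c"] by (simp add: orthogonal_def span_base inner_commute)
  then have "M *v (x /\<^sub>R norm x) = 0"
    by (simp add: vec_eq_iff matrix_vector_mul_component)
  with \<open>x \<noteq> 0\<close> show ?thesis
    using that[of "x /\<^sub>R norm x"] by simp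
qed

text \<open>\<open>(1 + \<alpha>, \<beta>)\<close> is the cosine and sine of a small positive angle.\<close>

lemma exists_small_rotation:
  fixes e :: real
  assumes "0 < e"
  obtains \<alpha> \<beta> :: real where "\<alpha> < 0" and "0 < \<beta>" and "\<alpha>\<^sup>2 + \<beta>\<^sup>2 = - 2 * \<alpha>" and "- 2 * \<alpha> < e\<^sup>2"
proof -
  define \<delta> where "\<delta> = min 1 (e\<^sup>2 / 4)"
  have \<delta>: "0 < \<delta>" "\<delta> \<le> 1" "\<delta> < e\<^sup>2 / 2"
    using assms by (auto simp: \<delta>_def min_def)
  show ?thesis
  proof (rule that[of "- \<delta>" "sqrt (\<delta> * (2 - \<delta>))"])
    show "(- \<delta>)\<^sup>2 + (sqrt (\<delta> * (2 - \<delta>)))\<^sup>2 = - 2 * - \<delta>"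
      using \<delta> by (simp add: power2_eq_square algebra_simps)
  qed (use \<delta> in auto)
qed

lemma block_rotation:
  fixes A :: "real^('n::finite \<times> 'd::finite)^('n \<times> 'd)"
    and S :: "real^('p::finite)^('n \<times> 'd)"
  assumes sym: "transpose A = A" and diag: "blk A i i = mat 1" and S: "S \<in> stiefel_prod"
    and y: "norm y = 1" and u: "norm u = 1" "rowblk S i *v u = 0"
    and circle: "\<alpha>\<^sup>2 + \<beta>\<^sup>2 = - 2 * \<alpha>"
  defines "T \<equiv> S + block_outer i y (\<alpha> *\<^sub>R (transpose (rowblk S i) *v y) + \<beta> *\<^sub>R u)"
  shows "T \<in> stiefel_prod" and "(dist T S)\<^sup>2 = - 2 * \<alpha>"
    and "obj A T = obj A S + 2 * \<alpha> * (y \<bullet> ((rowblk (A ** S) i ** transpose (rowblk S i)) *v y) - 1)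
      + 2 * \<beta> * (y \<bullet> (rowblk (A ** S) i *v u))"
proof -
  let ?G = "rowblk (A ** S) i" and ?M = "rowblk S i"
  define v where "v = transpose ?M *v y"
  define w where "w = \<alpha> *\<^sub>R v + \<beta> *\<^sub>R u"
  have T: "T = S + block_outer i y w"
    by (simp add: T_def w_def v_def)
  have yy: "y \<bullet> y = 1"
    using y by (simp add: norm_eq_1)
  have "?M ** transpose ?M = mat 1"
    using S by (simp add: stiefel_prod_def)
  then have Mv: "?M *v v = y"
    unfolding v_def matrix_vector_mul_assoc by simp
  have "v \<bullet> v = (y v* ?M) \<bullet> v"
    by (simp add: v_def)
  also have "\<dots> = 1"
    using Mv yy by (simp only: dot_lmul_matrix)
  finally have vv: "v \<bullet> v = 1" .
  have uv: "u \<bullet> v = 0"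
    using u by (simp add: v_def inner_commute[of u] dot_lmul_matrix)
  have Mw: "?M *v w = \<alpha> *\<^sub>R y"
    by (simp add: w_def matrix_vector_right_distrib matrix_vector_mult_scaleR Mv u)
  have ww: "w \<bullet> w = - 2 * \<alpha>"
    using u(1) uv vv circle
    by (simp add: w_def norm_eq_1 inner_add_left inner_add_right inner_commute[of v u] power2_eq_square)
  show "T \<in> stiefel_prod"
    unfolding T using S Mw ww by (rule add_block_outer_in_stiefel_prod)
  show "(dist T S)\<^sup>2 = - 2 * \<alpha>"
    using y ww by (simp add: T dist_norm norm_block_outer power2_norm_eq_inner)
  have "y \<bullet> (?G *v v) = y \<bullet> ((?G ** transpose ?M) *v y)"
    unfolding v_def by (simp only: matrix_vector_mul_assoc)
  moreover have "y \<bullet> (?G *v w) = \<alpha> * (y \<bullet> (?G *v v)) + \<beta> * (y \<bullet> (?G *v u))"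
    by (simp add: w_def matrix_vector_right_distrib matrix_vector_mult_scaleR inner_add_right)
  ultimately show "obj A T = obj A S + 2 * \<alpha> * (y \<bullet> ((?G ** transpose ?M) *v y) - 1)
      + 2 * \<beta> * (y \<bullet> (?G *v u))"
    using obj_add_block_outer[OF sym diag, of S y w] yy ww by (simp add: T algebra_simps)
qed

lemma local_max_imp_quadratic_form_ge_1:
  fixes A :: "real^('n::finite \<times> 'd::finite)^('n \<times> 'd)"
    and S :: "real^('p::finite)^('n \<times> 'd)"
  assumes sym: "transpose A = A" and diag: "blk A i i = mat 1" and card: "CARD('d) < CARD('p)"
    and max: "local_max_on (obj A) stiefel_prod S" and y: "norm y = 1"
  shows "1 \<le> y \<bullet> ((rowblk (A ** S) i ** transpose (rowblk S i)) *v y)"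
proof -
  let ?G = "rowblk (A ** S) i" and ?M = "rowblk S i"
  obtain e where "0 < e" and S: "S \<in> stiefel_prod"
    and e: "\<And>T. T \<in> stiefel_prod \<Longrightarrow> dist T S < e \<Longrightarrow> obj A T \<le> obj A S"
    using max unfolding local_max_on_def by blast
  obtain u where u: "norm u = 1" "?M *v u = 0" and Gu: "0 \<le> y \<bullet> (?G *v u)"
  proof -
    obtain u where u: "norm u = 1" "?M *v u = 0"
      using exists_unit_vector_in_null_space card by blast
    show thesis
    proof (cases "0 \<le> y \<bullet> (?G *v u)")
      case False
      then show thesis
        using that[of "- u"] u by (simp add: linear_neg[OF matrix_vector_mul_linear])
    qed (use u that in blast)
  qed
  obtain \<alpha> \<beta> where "\<alpha> < 0" "0 < \<beta>" and circle: "\<alpha>\<^sup>2 + \<beta>\<^sup>2 = - 2 * \<alpha>" and small: "- 2 * \<alpha> < e\<^sup>2"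
    using exists_small_rotation \<open>0 < e\<close> by blast
  let ?T = "S + block_outer i y (\<alpha> *\<^sub>R (transpose ?M *v y) + \<beta> *\<^sub>R u)"
  note T = block_rotation[OF sym diag S y u circle]
  have "(dist ?T S)\<^sup>2 < e\<^sup>2"
    using T(2) small by simp
  then have "dist ?T S < e"
    by (rule power2_less_imp_less) (use \<open>0 < e\<close> in linarith)
  with T(1) have "obj A ?T \<le> obj A S"
    by (rule e)
  then have "2 * \<alpha> * (y \<bullet> ((?G ** transpose ?M) *v y) - 1) + 2 * \<beta> * (y \<bullet> (?G *v u)) \<le> 0"
    using T(3) by linarith
  moreover have "0 \<le> 2 * \<beta> * (y \<bullet> (?G *v u))"
    using \<open>0 < \<beta>\<close> Gu by simp
  ultimately have "2 * \<alpha> * (y \<bullet> ((?G ** transpose ?M) *v y) - 1) \<le> 0"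
    by linarith
  then show ?thesis
    using \<open>\<alpha> < 0\<close> by (simp add: mult_le_0_iff)
qed

theorem lemma3:
  fixes A :: "real^('n::finite \<times> 'd::finite)^('n \<times> 'd)"
    and S :: "real^('p::finite)^('n \<times> 'd)"
  assumes "transpose A = A"
    and "\<forall>i. blk A i i = mat 1"
    and "CARD('p) > CARD('d)"
    and "local_max_on (obj A) stiefel_prod S"
  shows "\<forall>i. loewner_le (mat 1) (Lambda_blk A S i)"
proof
  fix i
  let ?P = "rowblk (A ** S) i ** transpose (rowblk S i)"
  have L: "Lambda_blk A S i = (1/2) *\<^sub>R (transpose ?P + ?P)"
    using assms(1) by (rule Lambda_blk_eq)
  show "loewner_le (mat 1) (Lambda_blk A S i)"
  proof (rule loewner_le_mat_1I)
    show "transpose (Lambda_blk A S i) = Lambda_blk A S i"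
      by (simp add: L vec_eq_iff transpose_def add.commute)
    show "1 \<le> y \<bullet> (Lambda_blk A S i *v y)" if "norm y = 1" for y
      using local_max_imp_quadratic_form_ge_1[OF assms(1) assms(2)[rule_format] assms(3,4) that]
      by (simp add: L inner_symmetric_part_mult)
  qed
qed

end
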